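(* Let $\alpha$ be irrational. Then, as $n\to\infty$, the Sós permutations $\beta_\alpha$ of $[n]$ satisfy $D(\beta_\alpha)=o(n)$; i.e., $\beta_\alpha$ is quasirandom.
   Context: $[n]=\{1,\dots,n\}$, identified with $\mathbb{Z}_n$; $\{x\}$ is the fractional part of $x$. For irrational $\alpha$, $\beta_\alpha$ is the permutation of $[n]$ with $\beta_\alpha(t)=|\{s\in[n]:\{\alpha s\}\le\{\alpha t\}\}|$. An interval of $\mathbb{Z}_n$ is any subset that is the image of an interval of consecutive integers under the projection $\mathbb{Z}\to\mathbb{Z}_n$ (wrap-around allowed). For $S,T\subseteq\mathbb{Z}_n$, $D_T(S)=\bigl|\,|S\cap T|-|S||T|/n\,\bigr|$, and for a permutation $\sigma$, $D(\sigma)=\max_{I,J}D_J(\sigma(I))$ over all intervals $I,J$. *)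

theory Defs
  imports Complex_Main "HOL-Library.Landau_Symbols"
begin

text \<open>[n] = {1..n}, identified with Z_n via t \<mapsto> t mod n.\<close>

definition sos_perm :: "real \<Rightarrow> nat \<Rightarrow> nat \<Rightarrow> nat" where
  "sos_perm \<alpha> n t = card {s \<in> {1..n}. frac (\<alpha> * real s) \<le> frac (\<alpha> * real t)}"

definition zn_interval :: "nat \<Rightarrow> nat set \<Rightarrow> bool" where
  "zn_interval n I \<longleftrightarrow> (\<exists>a b :: int. I = {t \<in> {1..n}. \<exists>i \<in> {a..b}. int t mod int n = i mod int n})"

definition disc :: "nat \<Rightarrow> nat set \<Rightarrow> nat set \<Rightarrow> real" where
  "disc n T S = \<bar>real (card (S \<inter> T)) - real (card S) * real (card T) / real n\<bar>"

definition perm_disc :: "nat \<Rightarrow> (nat \<Rightarrow> nat) \<Rightarrow> real" where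
  "perm_disc n \<sigma> = Max {disc n J (\<sigma> ` I) | I J. zn_interval n I \<and> zn_interval n J}"

end

theory Submission
  imports Defs "HOL-Analysis.Kronecker_Approximation_Theorem"
begin

text \<open>
  With the sawtooth \<open>\<psi> x = frac x - 1/2\<close> one has \<open>[frac x < v] = v - \<psi> x + \<psi> (x - v)\<close>, so
  the number of \<open>t \<le> u\<close> with \<open>frac (\<alpha> t) < v\<close> is \<open>u v\<close> up to two sums
  \<open>S u c = \<Sum>k\<le>u. \<psi> (k \<alpha> + c)\<close>. These are \<open>o(u)\<close> uniformly in \<open>c\<close>: Kronecker gives \<open>k\<close> with
  \<open>\<eta> = frac (k \<alpha>)\<close> small; replacing \<open>c\<close> by \<open>c + j \<eta>\<close> changes \<open>S u c\<close> by at most \<open>j k\<close>, while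
  \<open>\<Sum>j < \<lfloor>1/\<eta>\<rfloor>. S u (c + j \<eta>)\<close> is a sum of \<open>u\<close> sums of \<open>\<psi>\<close> over grids of mesh \<open>\<eta>\<close> winding
  once around the circle, each of which is bounded.

  The Sos permutation sorts the points \<open>frac (\<alpha> t)\<close>, so the preimage of every prefix of \<open>[n]\<close> is a
  set \<open>{t. frac (\<alpha> t) < v}\<close>; hence prefix-by-prefix discrepancies are \<open>o(n)\<close>. The indicator of an
  interval of \<open>\<int>\<^sub>n\<close> is a signed sum of three prefix indicators, and the signed discrepancy
  \<open>perm_correlation\<close> is bilinear in the two indicators.
\<close>

definition sawtooth :: "real \<Rightarrow> real" where
  "sawtooth x = frac x - 1/2"

definition sawtooth_sum :: "real \<Rightarrow> nat \<Rightarrow> real \<Rightarrow> real" where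
  "sawtooth_sum a L c = (\<Sum>k=1..L. sawtooth (real k * a + c))"

lemma abs_sawtooth_le: "\<bar>sawtooth x\<bar> \<le> 1/2"
  using frac_ge_0[of x] frac_lt_1[of x] unfolding sawtooth_def by linarith

lemma sawtooth_add_of_int [simp]: "sawtooth (x + of_int z) = sawtooth x"
  by (simp add: sawtooth_def)

lemma sawtooth_sum_add_of_int [simp]: "sawtooth_sum a L (c + of_int z) = sawtooth_sum a L c"
  unfolding sawtooth_sum_def by (simp flip: add.assoc)

lemma sawtooth_sum_shift_step:
  "sawtooth_sum a L (c + a) = sawtooth_sum a L c - sawtooth (a + c) + sawtooth (real (Suc L) * a + c)"
proof (induction L)
  case (Suc L)
  have "sawtooth_sum a (Suc L) (c + a) = sawtooth_sum a L (c + a) + sawtooth (real (Suc L) * a + (c + a))"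
    by (simp add: sawtooth_sum_def)
  also have "real (Suc L) * a + (c + a) = real (Suc (Suc L)) * a + c"
    by (simp add: algebra_simps)
  finally show ?case
    using Suc.IH by (simp add: sawtooth_sum_def)
qed (simp add: sawtooth_sum_def)

lemma sawtooth_sum_shift_le: "\<bar>sawtooth_sum a L (c + real m * a) - sawtooth_sum a L c\<bar> \<le> real m"
proof (induction m)
  case (Suc m)
  let ?c = "c + real m * a"
  have "c + real (Suc m) * a = ?c + a"
    by (simp add: algebra_simps)
  then have "sawtooth_sum a L (c + real (Suc m) * a)
      = sawtooth_sum a L ?c - sawtooth (a + ?c) + sawtooth (real (Suc L) * a + ?c)"
    by (simp only: sawtooth_sum_shift_step)
  then show ?case
    using Suc.IH abs_sawtooth_le[of "a + ?c"] abs_sawtooth_le[of "real (Suc L) * a + ?c"]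
    by linarith
qed simp

lemma card_above_threshold_bounds:
  fixes r :: real
  assumes "0 \<le> r"
  shows "real N - r - 1 \<le> real (card {j\<in>{..<N}. r \<le> real j})"
    and "real (card {j\<in>{..<N}. r \<le> real j}) \<le> max 0 (real N - r)"
proof -
  let ?m = "nat \<lceil>r\<rceil>"
  have "{j\<in>{..<N}. r \<le> real j} = {?m..<N}"
    using assms by (auto simp: ceiling_le_iff nat_le_iff)
  then have card_eq: "card {j\<in>{..<N}. r \<le> real j} = N - ?m"
    by simp
  have m: "r \<le> real ?m" "real ?m < r + 1"
    using assms by linarith+
  let ?C = "real (card {j\<in>{..<N}. r \<le> real j})"
  have "real N - r - 1 \<le> ?C \<and> ?C \<le> max 0 (real N - r)"
  proof (cases "?m \<le> N")
    case True
    then have "?C = real N - real ?m"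
      unfolding card_eq by (rule of_nat_diff)
    with m show ?thesis
      by (simp add: le_max_iff_disj)
  next
    case False
    with m show ?thesis
      by (simp add: card_eq)
  qed
  then show "real N - r - 1 \<le> ?C" "?C \<le> max 0 (real N - r)"
    by simp_all
qed

lemma sum_real_lessThan: "(\<Sum>j<N. real j) = real N * (real N - 1) / 2"
  by (induction N) (auto simp: field_simps)

lemma sawtooth_progression_sum_eq:
  assumes \<eta>: "0 < \<eta>" "real N * \<eta> \<le> 1"
  shows "(\<Sum>j<N. sawtooth (y + real j * \<eta>)) = real N * frac y - real N / 2
    + \<eta> * (real N * (real N - 1) / 2) - real (card {j\<in>{..<N}. (1 - frac y) / \<eta> \<le> real j})"
proof -
  let ?r = "(1 - frac y) / \<eta>"
  have frac_progression: "frac (y + real j * \<eta>) = frac y + real j * \<eta> - of_bool (?r \<le> real j)"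
    if "j < N" for j
  proof -
    have "real j * \<eta> \<le> (real N - 1) * \<eta>"
      using that \<eta>(1) by (intro mult_right_mono) auto
    then have "frac (real j * \<eta>) = real j * \<eta>"
      using \<eta> by (simp add: frac_eq algebra_simps)
    moreover have "?r \<le> real j \<longleftrightarrow> 1 \<le> frac y + real j * \<eta>"
      using \<eta>(1) by (simp add: divide_le_eq algebra_simps)
    ultimately show ?thesis
      by (simp add: frac_add)
  qed
  have "(\<Sum>j<N. sawtooth (y + real j * \<eta>))
      = (\<Sum>j<N. frac y - 1/2 + \<eta> * real j - of_bool (?r \<le> real j))"
    by (intro sum.cong) (simp_all add: sawtooth_def frac_progression)
  then show ?thesis
    by (simp add: sum.distrib sum_subtractf sum_real_lessThan Int_def algebra_simps flip: sum_distrib_left)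
qed

lemma scaled_triangular_number_bounds:
  assumes "0 < N" "real N * \<eta> \<le> 1" "1 < (real N + 1) * \<eta>"
  shows "real N / 2 - 1 \<le> \<eta> * (real N * (real N - 1) / 2)"
    and "\<eta> * (real N * (real N - 1) / 2) \<le> real N / 2 - 1/2"
proof -
  have "(real N + 1) * (real N / 2 - 1) \<le> 1 * (real N * (real N - 1) / 2)"
    by (simp add: algebra_simps)
  also have "\<dots> \<le> ((real N + 1) * \<eta>) * (real N * (real N - 1) / 2)"
    using assms by (intro mult_right_mono) auto
  also have "\<dots> = (real N + 1) * (\<eta> * (real N * (real N - 1) / 2))"
    by simp
  finally show "real N / 2 - 1 \<le> \<eta> * (real N * (real N - 1) / 2)"
    by (simp add: mult_le_cancel_left_pos)
  have "\<eta> * (real N * (real N - 1) / 2) = (real N * \<eta>) * ((real N - 1) / 2)"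
    by simp
  also have "\<dots> \<le> 1 * ((real N - 1) / 2)"
    using assms by (intro mult_right_mono) auto
  finally show "\<eta> * (real N * (real N - 1) / 2) \<le> real N / 2 - 1/2"
    by simp
qed

lemma abs_sawtooth_progression_sum_le:
  assumes \<eta>: "0 < \<eta>" "real N * \<eta> \<le> 1" "1 < (real N + 1) * \<eta>"
  shows "\<bar>\<Sum>j<N. sawtooth (y + real j * \<eta>)\<bar> \<le> 3/2"
proof (cases "N = 0")
  case False
  define z where "z = frac y"
  define r where "r = (1 - z) / \<eta>"
  define C where "C = real (card {j\<in>{..<N}. r \<le> real j})"
  define P where "P = \<eta> * (real N * (real N - 1) / 2)"
  have z: "0 \<le> z" "z < 1"
    by (simp_all add: z_def frac_lt_1)
  have "real N \<le> 1 / \<eta>" "1 / \<eta> \<le> real N + 1"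
    using \<eta> by (simp_all add: field_simps)
  then have "(1 - z) * real N \<le> (1 - z) * (1 / \<eta>)" "(1 - z) * (1 / \<eta>) \<le> (1 - z) * (real N + 1)"
    using z by (intro mult_left_mono; simp)+
  then have r: "real N - real N * z \<le> r" "r \<le> real N + 1 - real N * z - z"
    by (simp_all add: r_def algebra_simps)
  have C: "real N - r - 1 \<le> C" "C \<le> max 0 (real N - r)"
    using card_above_threshold_bounds[of r N] z \<eta>(1) by (simp_all add: C_def r_def)
  have P: "real N / 2 - 1 \<le> P" "P \<le> real N / 2 - 1/2"
    using scaled_triangular_number_bounds[OF _ \<eta>(2,3)] False by (simp_all add: P_def)
  have "0 \<le> real N * z"
    using z by simp
  then have C_upper: "C \<le> real N * z"
    using C(2) r(1) by linarith
  have "(\<Sum>j<N. sawtooth (y + real j * \<eta>)) = real N * z - real N / 2 + P - C"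
    using sawtooth_progression_sum_eq[OF \<eta>(1,2)] by (simp add: z_def r_def C_def P_def)
  moreover have "real N * z - real N / 2 + P - C \<le> 3/2"
    using r(2) C(1) z P(2) by linarith
  moreover have "-1 \<le> real N * z - real N / 2 + P - C"
    using C_upper P(1) by linarith
  ultimately show ?thesis
    unfolding abs_le_iff by (intro conjI; linarith)
qed simp

lemma sawtooth_sum_shift_frac_le:
  "\<bar>sawtooth_sum a L (c + real j * frac (real k * a)) - sawtooth_sum a L c\<bar> \<le> real (j * k)"
proof -
  have "c + real j * frac (real k * a) = (c + real (j * k) * a) + of_int (- (int j * \<lfloor>real k * a\<rfloor>))"
    by (simp add: frac_def algebra_simps)
  then have "sawtooth_sum a L (c + real j * frac (real k * a)) = sawtooth_sum a L (c + real (j * k) * a)"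
    by (simp only: sawtooth_sum_add_of_int)
  then show ?thesis
    using sawtooth_sum_shift_le[of a L c "j * k"] by simp
qed

lemma sawtooth_sum_averaged_le:
  fixes a c :: real and k N L :: nat
  defines "\<eta> \<equiv> frac (real k * a)"
  assumes \<eta>: "0 < \<eta>" "real N * \<eta> \<le> 1" "1 < (real N + 1) * \<eta>"
  shows "real N * \<bar>sawtooth_sum a L c\<bar> \<le> 3/2 * real L + real N * real (N * k)"
proof -
  let ?S = "\<lambda>j. sawtooth_sum a L (c + real j * \<eta>)"
  have "\<bar>\<Sum>j<N. ?S j\<bar> = \<bar>\<Sum>m=1..L. \<Sum>j<N. sawtooth ((real m * a + c) + real j * \<eta>)\<bar>"
    unfolding sawtooth_sum_def by (subst sum.swap) (simp add: add.assoc)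
  also have "\<dots> \<le> (\<Sum>m=1..L. \<bar>\<Sum>j<N. sawtooth ((real m * a + c) + real j * \<eta>)\<bar>)"
    by (rule sum_abs)
  also have "\<dots> \<le> (\<Sum>m=1..L. 3/2)"
    by (intro sum_mono abs_sawtooth_progression_sum_le \<eta>)
  finally have averaged: "\<bar>\<Sum>j<N. ?S j\<bar> \<le> 3/2 * real L"
    by simp
  have "\<bar>\<Sum>j<N. sawtooth_sum a L c - ?S j\<bar> \<le> (\<Sum>j<N. \<bar>?S j - sawtooth_sum a L c\<bar>)"
    by (subst abs_minus_commute) (rule sum_abs)
  also have "\<dots> \<le> (\<Sum>j<N. real (N * k))"
  proof (intro sum_mono)
    fix j
    assume "j \<in> {..<N}"
    then have "j * k \<le> N * k"
      by (simp add: mult_le_mono1)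
    then have "real (j * k) \<le> real (N * k)"
      by (simp only: of_nat_le_iff)
    then show "\<bar>?S j - sawtooth_sum a L c\<bar> \<le> real (N * k)"
      using sawtooth_sum_shift_frac_le[of a L c j k] unfolding \<eta>_def by linarith
  qed
  finally have shifts: "\<bar>\<Sum>j<N. sawtooth_sum a L c - ?S j\<bar> \<le> real N * real (N * k)"
    by simp
  have "real N * sawtooth_sum a L c = (\<Sum>j<N. ?S j) + (\<Sum>j<N. sawtooth_sum a L c - ?S j)"
    by (simp add: sum_subtractf)
  then have "\<bar>real N * sawtooth_sum a L c\<bar> \<le> 3/2 * real L + real N * real (N * k)"
    using averaged shifts by linarith
  then show ?thesis
    by (simp add: abs_mult)
qed

lemma sawtooth_sum_sublinear:
  assumes "a \<notin> \<rat>" "\<epsilon> > 0"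
  obtains K where "\<And>L c. \<bar>sawtooth_sum a L c\<bar> \<le> \<epsilon> * real L + K"
proof -
  define \<delta> where "\<delta> = min (\<epsilon> / 6) (1/4)"
  have \<delta>: "0 < \<delta>" "\<delta> \<le> \<epsilon> / 6" "\<delta> \<le> 1/4"
    using assms(2) by (auto simp: \<delta>_def)
  obtain k where "\<bar>frac (real k * a) - \<delta>\<bar> < \<delta>"
    using Kronecker_approx_1_explicit[OF assms(1), of \<delta> \<delta>] \<delta> by auto
  moreover define \<eta> where "\<eta> = frac (real k * a)"
  ultimately have \<eta>: "0 < \<eta>" "\<eta> \<le> 1/2" "3 * \<eta> \<le> \<epsilon>"
    using \<delta> by linarith+
  define N where "N = nat \<lfloor>1 / \<eta>\<rfloor>"
  have "real N \<le> 1 / \<eta>" "1 / \<eta> < real N + 1"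
    using \<eta> by (simp_all add: N_def)
  then have N: "real N * \<eta> \<le> 1" "1 < (real N + 1) * \<eta>"
    using \<eta> by (simp_all add: field_simps)
  then have "1/2 < real N * \<eta>"
    using \<eta> by (simp add: algebra_simps)
  moreover have "3 * \<eta> * real N \<le> \<epsilon> * real N"
    using \<eta>(3) by (rule mult_right_mono) simp
  ultimately have "3/2 \<le> \<epsilon> * real N"
    by (simp add: algebra_simps)
  then have N_pos: "0 < real N"
    by (cases "N = 0") auto
  have bound_L: "3/2 * real L \<le> real N * (\<epsilon> * real L)" for L
    using \<open>3/2 \<le> \<epsilon> * real N\<close> mult_right_mono[of "3/2" "\<epsilon> * real N" "real L"]
    by (simp add: algebra_simps)
  have "\<bar>sawtooth_sum a L c\<bar> \<le> \<epsilon> * real L + real (N * k)" for L c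
  proof -
    have "real N * \<bar>sawtooth_sum a L c\<bar> \<le> 3/2 * real L + real N * real (N * k)"
      using sawtooth_sum_averaged_le \<eta>(1) N unfolding \<eta>_def by blast
    also have "\<dots> \<le> real N * (\<epsilon> * real L + real (N * k))"
      using bound_L[of L] by (simp add: distrib_left)
    finally show ?thesis
      using N_pos by (simp add: mult_le_cancel_left_pos)
  qed
  then show ?thesis
    using that by blast
qed

lemma frac_diff_unit_interval:
  assumes "0 \<le> y" "y < 1" "0 \<le> v" "v \<le> 1"
  shows "frac (y - v) = y - v + of_bool (y < v)"
  using assms by (auto simp: frac_unique_iff)

lemma of_bool_frac_less_eq:
  assumes "0 \<le> v" "v \<le> 1"
  shows "of_bool (frac x < v) = v - sawtooth x + sawtooth (x - v)"
proof -
  have "x - v = (frac x - v) + of_int \<lfloor>x\<rfloor>"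
    by (simp add: frac_def)
  then have "frac (x - v) = frac (frac x - v)"
    by (metis frac_add_of_int_right)
  also have "\<dots> = frac x - v + of_bool (frac x < v)"
    using assms by (simp add: frac_diff_unit_interval frac_lt_1)
  finally show ?thesis
    by (simp add: sawtooth_def)
qed

lemma card_frac_less_eq:
  assumes "0 \<le> v" "v \<le> 1"
  shows "real (card {t\<in>{1..u}. frac (a * real t) < v})
    = real u * v - sawtooth_sum a u 0 + sawtooth_sum a u (- v)"
proof -
  have "real (card {t\<in>{1..u}. frac (a * real t) < v}) = (\<Sum>t=1..u. of_bool (frac (real t * a) < v))"
    by (simp add: Int_def conj_commute mult.commute)
  also have "\<dots> = (\<Sum>t=1..u. v - sawtooth (real t * a + 0) + sawtooth (real t * a + - v))"
    using of_bool_frac_less_eq[OF assms] by simp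
  also have "\<dots> = real u * v - sawtooth_sum a u 0 + sawtooth_sum a u (- v)"
    by (simp add: sawtooth_sum_def sum.distrib sum_subtractf)
  finally show ?thesis .
qed

lemma card_frac_less_sublinear:
  assumes "a \<notin> \<rat>" "\<epsilon> > 0"
  obtains K where "\<And>u v. 0 \<le> v \<Longrightarrow> v \<le> 1 \<Longrightarrow>
    \<bar>real (card {t\<in>{1..u}. frac (a * real t) < v}) - real u * v\<bar> \<le> \<epsilon> * real u + K"
proof -
  obtain K where K: "\<And>L c. \<bar>sawtooth_sum a L c\<bar> \<le> \<epsilon> / 2 * real L + K"
    using sawtooth_sum_sublinear[OF assms(1), of "\<epsilon> / 2"] assms(2) by auto
  have "\<bar>real (card {t\<in>{1..u}. frac (a * real t) < v}) - real u * v\<bar> \<le> \<epsilon> * real u + 2 * K"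
    if "0 \<le> v" "v \<le> 1" for u v
    using card_frac_less_eq[OF that, of u a] K[of u 0] K[of u "- v"] by (simp add: abs_le_iff)
  then show ?thesis
    using that by blast
qed

lemma sos_perm_mono:
  "frac (a * real s) \<le> frac (a * real t) \<Longrightarrow> sos_perm a n s \<le> sos_perm a n t"
  unfolding sos_perm_def by (intro card_mono) auto

lemma sos_perm_strict_mono:
  assumes "t \<in> {1..n}" "frac (a * real s) < frac (a * real t)"
  shows "sos_perm a n s < sos_perm a n t"
proof -
  let ?below = "\<lambda>x. {s'\<in>{1..n}. frac (a * real s') \<le> x}"
  have "?below (frac (a * real s)) \<subseteq> ?below (frac (a * real t))"
    "t \<in> ?below (frac (a * real t))" "t \<notin> ?below (frac (a * real s))"
    using assms by auto
  then have "?below (frac (a * real s)) \<subset> ?below (frac (a * real t))"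
    by blast
  then show ?thesis
    unfolding sos_perm_def by (intro psubset_card_mono) auto
qed

lemma sos_perm_less_iff:
  assumes "t \<in> {1..n}"
  shows "sos_perm a n s < sos_perm a n t \<longleftrightarrow> frac (a * real s) < frac (a * real t)"
  using sos_perm_mono[of a t s n] sos_perm_strict_mono[OF assms, of a s] by fastforce

lemma sos_perm_in_range:
  assumes "t \<in> {1..n}"
  shows "sos_perm a n t \<in> {1..n}"
proof -
  have "t \<in> {s\<in>{1..n}. frac (a * real s) \<le> frac (a * real t)}"
    using assms by simp
  then have "0 < sos_perm a n t"
    unfolding sos_perm_def by (subst card_gt_0_iff) auto
  moreover have "sos_perm a n t \<le> card {1..n}"
    unfolding sos_perm_def by (intro card_mono) auto
  ultimately show ?thesis
    by simp
qed

lemma frac_mult_of_nat_inj: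
  assumes "a \<notin> \<rat>" "frac (a * real s) = frac (a * real t)"
  shows "s = t"
proof (rule ccontr)
  assume "s \<noteq> t"
  obtain m where "a * real s - a * real t = of_int m"
    using frac_diff_eq[OF assms(2)] by (auto elim: Ints_cases)
  with \<open>s \<noteq> t\<close> have "a = of_int m / (real s - real t)"
    by (simp add: field_simps)
  with assms(1) show False
    by simp
qed

lemma bij_betw_sos_perm:
  assumes "a \<notin> \<rat>"
  shows "bij_betw (sos_perm a n) {1..n} {1..n}"
proof -
  have "inj_on (sos_perm a n) {1..n}"
  proof (rule inj_onI)
    fix s t
    assume "s \<in> {1..n}" "t \<in> {1..n}" "sos_perm a n s = sos_perm a n t"
    then have "frac (a * real s) = frac (a * real t)"
      using sos_perm_less_iff[of t n a s] sos_perm_less_iff[of s n a t] by fastforce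
    then show "s = t"
      using frac_mult_of_nat_inj[OF assms] by blast
  qed
  moreover have "sos_perm a n ` {1..n} \<subseteq> {1..n}"
    using sos_perm_in_range by blast
  ultimately show ?thesis
    by (simp add: bij_betw_def endo_inj_surj)
qed

lemma sos_perm_prefix_preimage:
  assumes "a \<notin> \<rat>" "w \<le> n"
  obtains v where "0 \<le> v" "v \<le> 1"
    and "{1..n} \<inter> sos_perm a n -` {..w} = {t\<in>{1..n}. frac (a * real t) < v}"
proof (cases "w = n")
  case True
  have "sos_perm a n t \<le> w" if "t \<in> {1..n}" for t
    using sos_perm_in_range[OF that] True by simp
  then have "{1..n} \<inter> sos_perm a n -` {..w} = {t\<in>{1..n}. frac (a * real t) < 1}"
    by (auto simp: frac_lt_1)
  then show ?thesis
    by (intro that[of 1]) simp_all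
next
  case False
  with assms have "Suc w \<in> sos_perm a n ` {1..n}"
    using bij_betw_imp_surj_on[OF bij_betw_sos_perm] by simp
  then obtain t where t: "t \<in> {1..n}" "sos_perm a n t = Suc w"
    by auto
  have "sos_perm a n s \<le> w \<longleftrightarrow> frac (a * real s) < frac (a * real t)" if "s \<in> {1..n}" for s
    using sos_perm_less_iff[OF t(1), of a s] t(2) by (simp add: less_Suc_eq_le)
  then have "{1..n} \<inter> sos_perm a n -` {..w} = {s\<in>{1..n}. frac (a * real s) < frac (a * real t)}"
    by auto
  then show ?thesis
    by (intro that[of "frac (a * real t)"]) (simp_all add: less_imp_le[OF frac_lt_1])
qed

definition perm_correlation :: "nat \<Rightarrow> (nat \<Rightarrow> nat) \<Rightarrow> (nat \<Rightarrow> real) \<Rightarrow> (nat \<Rightarrow> real) \<Rightarrow> real" where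
  "perm_correlation n \<sigma> f g =
    (\<Sum>t\<in>{1..n}. f t * g (\<sigma> t)) - (\<Sum>t\<in>{1..n}. f t) * (\<Sum>t\<in>{1..n}. g t) / real n"

lemma sum_indicator_eq_card_real:
  "finite A \<Longrightarrow> (\<Sum>t\<in>A. indicator K t) = real (card (A \<inter> K))"
  unfolding indicator_def of_bool_def by (simp add: sum.If_cases)

lemma disc_image_eq_perm_correlation:
  assumes "inj_on \<sigma> I" "I \<subseteq> {1..n}" "J \<subseteq> {1..n}"
  shows "disc n J (\<sigma> ` I) = \<bar>perm_correlation n \<sigma> (indicator I) (indicator J)\<bar>"
proof -
  have "\<sigma> ` I \<inter> J = \<sigma> ` ({1..n} \<inter> (I \<inter> \<sigma> -` J))"
    using assms(2) by blast
  then have "real (card (\<sigma> ` I \<inter> J)) = real (card ({1..n} \<inter> (I \<inter> \<sigma> -` J)))"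
    using assms(1) by (simp add: card_image inj_on_Int)
  also have "\<dots> = (\<Sum>t\<in>{1..n}. indicator (I \<inter> \<sigma> -` J) t)"
    by (rule sum_indicator_eq_card_real[symmetric]) simp
  also have "\<dots> = (\<Sum>t\<in>{1..n}. indicator I t * indicator J (\<sigma> t))"
    by (simp add: indicator_inter_arith indicator_vimage)
  finally have "real (card (\<sigma> ` I \<inter> J)) = (\<Sum>t\<in>{1..n}. indicator I t * indicator J (\<sigma> t))" .
  moreover have "(\<Sum>t\<in>{1..n}. indicator I t) = real (card I)" "(\<Sum>t\<in>{1..n}. indicator J t) = real (card J)"
    using assms(2,3) by (simp_all add: sum_indicator_eq_card_real Int_absorb1)
  ultimately show ?thesis
    using assms(1) by (simp add: disc_def perm_correlation_def card_image)
qed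

lemma perm_correlation_cong:
  assumes "\<And>t. t \<in> {1..n} \<Longrightarrow> f t = f' t" "\<And>t. t \<in> {1..n} \<Longrightarrow> g t = g' t"
    and "\<sigma> ` {1..n} \<subseteq> {1..n}"
  shows "perm_correlation n \<sigma> f g = perm_correlation n \<sigma> f' g'"
proof -
  have "(\<Sum>t\<in>{1..n}. f t * g (\<sigma> t)) = (\<Sum>t\<in>{1..n}. f' t * g' (\<sigma> t))"
    using assms by (intro sum.cong) (auto simp: image_subset_iff)
  moreover have "(\<Sum>t\<in>{1..n}. f t) = (\<Sum>t\<in>{1..n}. f' t)" "(\<Sum>t\<in>{1..n}. g t) = (\<Sum>t\<in>{1..n}. g' t)"
    using assms by (auto intro: sum.cong)
  ultimately show ?thesis
    by (simp add: perm_correlation_def)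
qed

lemma perm_correlation_add_left:
  "perm_correlation n \<sigma> (\<lambda>t. f t + f' t) g = perm_correlation n \<sigma> f g + perm_correlation n \<sigma> f' g"
  unfolding perm_correlation_def by (simp add: sum.distrib algebra_simps add_divide_distrib)

lemma perm_correlation_diff_left:
  "perm_correlation n \<sigma> (\<lambda>t. f t - f' t) g = perm_correlation n \<sigma> f g - perm_correlation n \<sigma> f' g"
  unfolding perm_correlation_def by (simp add: sum_subtractf algebra_simps diff_divide_distrib)

lemma perm_correlation_add_right:
  "perm_correlation n \<sigma> f (\<lambda>t. g t + g' t) = perm_correlation n \<sigma> f g + perm_correlation n \<sigma> f g'"
  unfolding perm_correlation_def by (simp add: sum.distrib algebra_simps add_divide_distrib)

lemma perm_correlation_diff_right:
  "perm_correlation n \<sigma> f (\<lambda>t. g t - g' t) = perm_correlation n \<sigma> f g - perm_correlation n \<sigma> f g'"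
  unfolding perm_correlation_def by (simp add: sum_subtractf algebra_simps diff_divide_distrib)

lemma dvd_between_cases:
  fixes d m :: int
  assumes "0 < m" "m dvd d" "- m < d" "d < 2 * m"
  shows "d = 0 \<or> d = m"
proof -
  obtain k where k: "d = m * k"
    using assms(2) by (elim dvdE)
  have "m * (- 1) < m * k" "m * k < m * 2"
    using assms(3,4) k by (simp_all add: mult.commute)
  then have "- 1 < k" "k < 2"
    by (simp_all only: mult_less_cancel_left_pos[OF assms(1)])
  then have "k = 0 \<or> k = 1"
    by linarith
  with k show ?thesis
    by auto
qed

definition zn_window :: "nat \<Rightarrow> int \<Rightarrow> int \<Rightarrow> nat set" where
  "zn_window n a b = {t\<in>{1..n}. \<exists>i\<in>{a..b}. int t mod int n = i mod int n}"

lemma zn_window_shift: "zn_window n (a + int n * q) (b + int n * q) = zn_window n a b"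
proof -
  have "(\<exists>i\<in>{a + int n * q..b + int n * q}. x = i mod int n) \<longleftrightarrow> (\<exists>i\<in>{a..b}. x = i mod int n)" for x
  proof
    assume "\<exists>i\<in>{a + int n * q..b + int n * q}. x = i mod int n"
    then obtain i where "i \<in> {a + int n * q..b + int n * q}" "x = i mod int n"
      by blast
    then show "\<exists>i\<in>{a..b}. x = i mod int n"
      by (intro bexI[of _ "i - int n * q"]) (auto simp: mod_eq_dvd_iff)
  next
    assume "\<exists>i\<in>{a..b}. x = i mod int n"
    then obtain i where "i \<in> {a..b}" "x = i mod int n"
      by blast
    then show "\<exists>i\<in>{a + int n * q..b + int n * q}. x = i mod int n"
      by (intro bexI[of _ "i + int n * q"]) auto
  qed
  then show ?thesis
    unfolding zn_window_def by (simp only:)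
qed

lemma mem_zn_window_short_iff:
  assumes "1 \<le> a" "a \<le> int n" "a \<le> b" "b \<le> a + int n - 2" "t \<in> {1..n}"
  shows "t \<in> zn_window n a b \<longleftrightarrow> a \<le> int t \<and> int t \<le> b \<or> int t + int n \<le> b"
proof
  assume "t \<in> zn_window n a b"
  then obtain i where i: "i \<in> {a..b}" "int t mod int n = i mod int n"
    by (auto simp: zn_window_def)
  have "int n dvd i - int t"
    using i(2) by (simp add: mod_eq_dvd_iff dvd_diff_commute)
  then have "i - int t = 0 \<or> i - int t = int n"
    using assms i(1) by (intro dvd_between_cases) auto
  with i(1) show "a \<le> int t \<and> int t \<le> b \<or> int t + int n \<le> b"
    by auto
next
  assume "a \<le> int t \<and> int t \<le> b \<or> int t + int n \<le> b"
  then obtain i where "i \<in> {a..b}" "i = int t \<or> i = int t + int n"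
    using assms by force
  then have "i \<in> {a..b}" "int t mod int n = i mod int n"
    by auto
  then show "t \<in> zn_window n a b"
    using assms(5) unfolding zn_window_def by blast
qed

lemma zn_window_full:
  assumes "int n \<le> b - a + 1"
  shows "zn_window n a b = {1..n}"
proof -
  have "t \<in> zn_window n a b" if t: "t \<in> {1..n}" for t
  proof -
    have "0 \<le> (int t - a) mod int n" "(int t - a) mod int n < int n"
      using t by simp_all
    then have "a \<le> a + (int t - a) mod int n" "a + (int t - a) mod int n \<le> b"
      using assms by linarith+
    moreover have "int t mod int n = (a + (int t - a) mod int n) mod int n"
      by (simp add: mod_add_right_eq)
    ultimately show ?thesis
      using t unfolding zn_window_def by fastforce
  qed
  then show ?thesis
    by (auto simp: zn_window_def)
qed

lemma zn_window_short_indicator_prefixes: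
  assumes "a \<le> b" "b - a + 1 < int n"
  obtains u l w :: nat where "\<And>t. t \<in> {1..n} \<Longrightarrow>
    indicator (zn_window n a b) t = indicator {..u} t - indicator {..l} t + (indicator {..w} t :: real)"
proof -
  define a' where "a' = (a - 1) mod int n + 1"
  define q where "q = - ((a - 1) div int n)"
  define b' where "b' = b + int n * q"
  have "a' = a + int n * q"
    using div_mult_mod_eq[of "a - 1" "int n"] by (simp add: a'_def q_def algebra_simps)
  then have window: "zn_window n a b = zn_window n a' b'"
    by (simp add: b'_def zn_window_shift)
  have "0 \<le> (a - 1) mod int n" "(a - 1) mod int n < int n"
    using assms by simp_all
  then have a': "1 \<le> a'" "a' \<le> int n" "a' \<le> b'" "b' \<le> a' + int n - 2"
    using assms \<open>a' = a + int n * q\<close> a'_def b'_def by linarith+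
  have nat_le: "t \<le> nat x \<longleftrightarrow> int t \<le> x" if "1 \<le> t" for t x
    using that by (cases "0 \<le> x") (auto simp: le_nat_iff)
  \<comment> \<open>\<open>{..b'} - {..a' - 1}\<close> is the part of the window inside \<open>[n]\<close>, \<open>{..b' - n}\<close> the part wrapping
    around; when \<open>b' \<le> n\<close> the truncation \<open>nat (b' - n) = 0\<close> makes the latter empty on \<open>[n]\<close>.\<close>
  show ?thesis
  proof (rule that[of "nat b'" "nat (a' - 1)" "nat (b' - int n)"])
    fix t
    assume t: "t \<in> {1..n}"
    then show "indicator (zn_window n a b) t = indicator {..nat b'} t - indicator {..nat (a' - 1)} t
        + (indicator {..nat (b' - int n)} t :: real)"
      using mem_zn_window_short_iff[OF a' t] a' unfolding window
      by (auto simp: indicator_def nat_le)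
  qed
qed

lemma zn_interval_indicator_prefixes:
  assumes "zn_interval n I"
  obtains u l w :: nat where "\<And>t. t \<in> {1..n} \<Longrightarrow>
    indicator I t = indicator {..u} t - indicator {..l} t + (indicator {..w} t :: real)"
proof -
  obtain a b where I: "I = zn_window n a b"
    using assms unfolding zn_interval_def zn_window_def by blast
  consider "b < a" | "int n \<le> b - a + 1" | "a \<le> b" "b - a + 1 < int n"
    by linarith
  then show ?thesis
  proof cases
    case 1
    then have "I = {}"
      by (auto simp: I zn_window_def)
    then show ?thesis
      by (intro that[of 0 0 0]) auto
  next
    case 2
    then show ?thesis
      by (intro that[of n 0 0]) (auto simp: I zn_window_full)
  next
    case 3
    then show ?thesis
      using zn_window_short_indicator_prefixes that unfolding I by blast
  qed
qed

lemma card_preimage_bij_betw: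
  assumes "bij_betw \<sigma> A B"
  shows "card (A \<inter> \<sigma> -` C) = card (B \<inter> C)"
proof -
  have "\<sigma> ` (A \<inter> \<sigma> -` C) = B \<inter> C"
    using assms by (auto simp: bij_betw_def)
  moreover have "inj_on \<sigma> (A \<inter> \<sigma> -` C)"
    using assms by (auto simp: bij_betw_def intro: inj_on_subset)
  ultimately show ?thesis
    by (metis card_image)
qed

lemma sum_indicator_atMost: "(\<Sum>t\<in>{1..n}. indicator {..u} t) = real (min u n)"
proof -
  have "{1..n} \<inter> {..u} = {1..min u n}"
    by auto
  then show ?thesis
    by (simp add: sum_indicator_eq_card_real)
qed

lemma sos_perm_prefix_correlation_eq:
  assumes "a \<notin> \<rat>"
  obtains v where "0 \<le> v" "v \<le> 1"
    and "card {t\<in>{1..n}. frac (a * real t) < v} = min w n"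
    and "perm_correlation n (sos_perm a n) (indicator {..u}) (indicator {..w})
      = real (card {t\<in>{1..min u n}. frac (a * real t) < v}) - real (min u n) * real (min w n) / real n"
proof -
  let ?\<sigma> = "sos_perm a n"
  obtain v where v: "0 \<le> v" "v \<le> 1"
    and preimage: "{1..n} \<inter> ?\<sigma> -` {..min w n} = {t\<in>{1..n}. frac (a * real t) < v}"
    using sos_perm_prefix_preimage[OF assms, of "min w n" n] by auto
  have "card {t\<in>{1..n}. frac (a * real t) < v} = card ({1..n} \<inter> ?\<sigma> -` {..min w n})"
    by (simp only: preimage)
  also have "\<dots> = card ({1..n} \<inter> {..min w n})"
    by (rule card_preimage_bij_betw[OF bij_betw_sos_perm[OF assms]])
  also have "{1..n} \<inter> {..min w n} = {1..min w n}"
    by auto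
  finally have card_v: "card {t\<in>{1..n}. frac (a * real t) < v} = min w n"
    by simp
  have "(\<Sum>t\<in>{1..n}. indicator {..u} t * indicator {..w} (?\<sigma> t) :: real)
      = (\<Sum>t\<in>{1..n}. indicator ({..u} \<inter> ?\<sigma> -` {..w}) t)"
    by (simp add: indicator_inter_arith indicator_vimage)
  also have "\<dots> = real (card ({1..n} \<inter> ({..u} \<inter> ?\<sigma> -` {..w})))"
    by (simp add: sum_indicator_eq_card_real)
  also have "{1..n} \<inter> ({..u} \<inter> ?\<sigma> -` {..w}) = {1..min u n} \<inter> ({1..n} \<inter> ?\<sigma> -` {..min w n})"
    using sos_perm_in_range[of _ n a] by auto
  also have "\<dots> = {t\<in>{1..min u n}. frac (a * real t) < v}"
    unfolding preimage by auto
  finally have "perm_correlation n ?\<sigma> (indicator {..u}) (indicator {..w})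
      = real (card {t\<in>{1..min u n}. frac (a * real t) < v}) - real (min u n) * real (min w n) / real n"
    unfolding perm_correlation_def sum_indicator_atMost by simp
  with v card_v show ?thesis
    using that by blast
qed

lemma sos_perm_prefix_correlation_le:
  assumes "a \<notin> \<rat>" "0 < n" "0 \<le> \<epsilon>"
    and K: "\<And>u v. 0 \<le> v \<Longrightarrow> v \<le> 1 \<Longrightarrow>
      \<bar>real (card {t\<in>{1..u}. frac (a * real t) < v}) - real u * v\<bar> \<le> \<epsilon> * real u + K"
  shows "\<bar>perm_correlation n (sos_perm a n) (indicator {..u}) (indicator {..w})\<bar> \<le> 2 * (\<epsilon> * real n + K)"
proof -
  define u' where "u' = min u n"
  define w' where "w' = min w n"
  obtain v where v: "0 \<le> v" "v \<le> 1" and card_v: "card {t\<in>{1..n}. frac (a * real t) < v} = w'"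
    and corr: "perm_correlation n (sos_perm a n) (indicator {..u}) (indicator {..w})
      = real (card {t\<in>{1..u'}. frac (a * real t) < v}) - real u' * real w' / real n"
    using sos_perm_prefix_correlation_eq[OF assms(1), of n w u] unfolding u'_def w'_def by blast
  have w': "\<bar>real w' - real n * v\<bar> \<le> \<epsilon> * real n + K"
    using K[OF v, of n] card_v by simp
  have u': "real u' \<le> real n"
    by (simp add: u'_def)
  have "\<bar>real (card {t\<in>{1..u'}. frac (a * real t) < v}) - real u' * v\<bar> \<le> \<epsilon> * real u' + K"
    using K[OF v] .
  also have "\<epsilon> * real u' \<le> \<epsilon> * real n"
    using u' assms(3) by (rule mult_left_mono)
  finally have first: "\<bar>real (card {t\<in>{1..u'}. frac (a * real t) < v}) - real u' * v\<bar> \<le> \<epsilon> * real n + K"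
    by simp
  have "real u' * v - real u' * real w' / real n = real u' / real n * (real n * v - real w')"
    using assms(2) by (simp add: field_simps)
  then have "\<bar>real u' * v - real u' * real w' / real n\<bar> = real u' / real n * \<bar>real w' - real n * v\<bar>"
    by (simp add: abs_mult abs_minus_commute)
  also have "\<dots> \<le> 1 * \<bar>real w' - real n * v\<bar>"
    using u' assms(2) by (intro mult_right_mono) auto
  finally have second: "\<bar>real u' * v - real u' * real w' / real n\<bar> \<le> \<epsilon> * real n + K"
    using w' by simp
  show ?thesis
    unfolding corr using first second by (smt (verit))
qed

lemma zn_interval_subset: "zn_interval n I \<Longrightarrow> I \<subseteq> {1..n}"
  unfolding zn_interval_def by auto

lemma sos_perm_interval_disc_le:
  assumes "a \<notin> \<rat>" "0 < n" "0 \<le> \<epsilon>"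
    and K: "\<And>u v. 0 \<le> v \<Longrightarrow> v \<le> 1 \<Longrightarrow>
      \<bar>real (card {t\<in>{1..u}. frac (a * real t) < v}) - real u * v\<bar> \<le> \<epsilon> * real u + K"
    and "zn_interval n I" "zn_interval n J"
  shows "disc n J (sos_perm a n ` I) \<le> 18 * (\<epsilon> * real n + K)"
proof -
  let ?\<sigma> = "sos_perm a n"
  define g where "g x y = perm_correlation n ?\<sigma> (indicator {..x}) (indicator {..y})" for x y
  define B where "B = 2 * (\<epsilon> * real n + K)"
  have g: "\<bar>g x y\<bar> \<le> B" for x y
    unfolding g_def B_def using sos_perm_prefix_correlation_le[OF assms(1-3) K] .
  obtain u l w where I: "\<And>t. t \<in> {1..n} \<Longrightarrow>
      indicator I t = indicator {..u} t - indicator {..l} t + (indicator {..w} t :: real)"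
    using zn_interval_indicator_prefixes[OF assms(5)] by blast
  obtain u' l' w' where J: "\<And>t. t \<in> {1..n} \<Longrightarrow>
      indicator J t = indicator {..u'} t - indicator {..l'} t + (indicator {..w'} t :: real)"
    using zn_interval_indicator_prefixes[OF assms(6)] by blast
  have "perm_correlation n ?\<sigma> (indicator I) (indicator J)
      = perm_correlation n ?\<sigma> (\<lambda>t. indicator {..u} t - indicator {..l} t + indicator {..w} t)
          (\<lambda>t. indicator {..u'} t - indicator {..l'} t + indicator {..w'} t)"
    using I J sos_perm_in_range by (intro perm_correlation_cong) auto
  also have "\<dots> = (g u u' - g u l' + g u w') - (g l u' - g l l' + g l w') + (g w u' - g w l' + g w w')"
    by (simp add: g_def perm_correlation_add_left perm_correlation_diff_left
        perm_correlation_add_right perm_correlation_diff_right)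
  finally have "\<bar>perm_correlation n ?\<sigma> (indicator I) (indicator J)\<bar> \<le> 9 * B"
    using g[of u u'] g[of u l'] g[of u w'] g[of l u'] g[of l l'] g[of l w']
      g[of w u'] g[of w l'] g[of w w'] by (simp add: abs_le_iff)
  moreover have "disc n J (?\<sigma> ` I) = \<bar>perm_correlation n ?\<sigma> (indicator I) (indicator J)\<bar>"
    using bij_betw_sos_perm[OF assms(1)] zn_interval_subset[OF assms(5)] zn_interval_subset[OF assms(6)]
    by (intro disc_image_eq_perm_correlation) (auto simp: bij_betw_def intro: inj_on_subset)
  ultimately show ?thesis
    by (simp add: B_def)
qed

lemma perm_disc_set_finite:
  "finite {disc n J (\<sigma> ` I) | I J. zn_interval n I \<and> zn_interval n J}"
proof (rule finite_subset)
  show "{disc n J (\<sigma> ` I) | I J. zn_interval n I \<and> zn_interval n J}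
      \<subseteq> (\<lambda>(I, J). disc n J (\<sigma> ` I)) ` (Pow {1..n} \<times> Pow {1..n})"
    using zn_interval_subset by fastforce
qed simp

lemma perm_disc_set_nonempty:
  "{disc n J (\<sigma> ` I) | I J. zn_interval n I \<and> zn_interval n J} \<noteq> {}"
proof -
  have "zn_interval n {}"
    unfolding zn_interval_def by (intro exI[of _ 1] exI[of _ 0]) auto
  then show ?thesis
    by blast
qed

lemma perm_disc_nonneg: "0 \<le> perm_disc n \<sigma>"
proof -
  have "perm_disc n \<sigma> \<in> {disc n J (\<sigma> ` I) | I J. zn_interval n I \<and> zn_interval n J}"
    unfolding perm_disc_def using perm_disc_set_finite perm_disc_set_nonempty by (rule Max_in)
  then show ?thesis
    by (auto simp: disc_def)
qed

lemma perm_disc_le: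
  assumes "\<And>I J. zn_interval n I \<Longrightarrow> zn_interval n J \<Longrightarrow> disc n J (\<sigma> ` I) \<le> B"
  shows "perm_disc n \<sigma> \<le> B"
  unfolding perm_disc_def using assms perm_disc_set_finite perm_disc_set_nonempty
  by (subst Max_le_iff) auto

lemma smallo_of_sublinear_bounds:
  fixes f :: "nat \<Rightarrow> real"
  assumes "\<And>\<epsilon>. 0 < \<epsilon> \<Longrightarrow> \<exists>K. \<forall>n>0. \<bar>f n\<bar> \<le> \<epsilon> * real n + K"
  shows "f \<in> o(\<lambda>n. real n)"
proof (rule landau_o.smallI)
  fix c :: real
  assume "0 < c"
  then obtain K where K: "\<And>n. 0 < n \<Longrightarrow> \<bar>f n\<bar> \<le> c / 2 * real n + K"
    using assms[of "c / 2"] by auto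
  have "eventually (\<lambda>n. 2 * K / c \<le> real n) at_top"
    using filterlim_real_sequentially unfolding filterlim_at_top by blast
  moreover have "eventually (\<lambda>n. 0 < (n :: nat)) at_top"
    by simp
  ultimately show "eventually (\<lambda>n. norm (f n) \<le> c * norm (real n)) at_top"
  proof eventually_elim
    case (elim n)
    then have "K \<le> c / 2 * real n"
      using \<open>0 < c\<close> by (simp add: field_simps)
    then show ?case
      using K[OF elim(2)] by simp
  qed
qed

theorem mainTheorem12:
  fixes \<alpha> :: real
  assumes "\<alpha> \<notin> \<rat>"
  shows "(\<lambda>n. perm_disc n (sos_perm \<alpha> n)) \<in> o(\<lambda>n. real n)"
proof (rule smallo_of_sublinear_bounds)
  fix \<epsilon> :: real
  assume "0 < \<epsilon>"
  then obtain K where K: "\<And>u v. 0 \<le> v \<Longrightarrow> v \<le> 1 \<Longrightarrow>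
      \<bar>real (card {t\<in>{1..u}. frac (\<alpha> * real t) < v}) - real u * v\<bar> \<le> \<epsilon> / 18 * real u + K"
    using card_frac_less_sublinear[OF assms, of "\<epsilon> / 18"] by auto
  have "\<bar>perm_disc n (sos_perm \<alpha> n)\<bar> \<le> \<epsilon> * real n + 18 * K" if "0 < n" for n
    using sos_perm_interval_disc_le[OF assms that _ K] \<open>0 < \<epsilon>\<close>
    by (auto simp: perm_disc_nonneg intro!: perm_disc_le)
  then show "\<exists>K. \<forall>n>0. \<bar>perm_disc n (sos_perm \<alpha> n)\<bar> \<le> \<epsilon> * real n + K"
    by blast
qed

end
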